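(* Let $I\subseteq\mathbb N$ be a finite index set and let $\{\varphi_n:n\in I\}\subseteq\mathcal H$ be a Riesz basis for its span $\mathcal T=\operatorname{span}\{\varphi_n:n\in I\}$ with constants $d_1,d_2$. Let $I$ be partitioned into disjoint subsets $I_1,\dots,I_r$ and set $\mathcal T_i=\operatorname{span}\{\varphi_n:n\in I_i\}$. Then for all $z\ge0$, $$E(\mathcal T,z)\le\sqrt{\frac{d_2}{d_1}\sum_{i=1}^rE(\mathcal T_i,z)^2},$$ and, for a sequence $\{\omega_n\}_{n\in\mathbb Z}$ giving rise to a Fourier frame for $\mathcal H$ and every $N\in\mathbb N$, $$\tilde E(\mathcal T,N)\le\sqrt{\frac{d_2}{d_1}\sum_{i=1}^r\tilde E(\mathcal T_i,N)^2}.$$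
   Context: $\mathcal H=\{f\in L^2(\mathbb R):\operatorname{supp}f\subseteq[0,1]\}$; $\hat f(\omega)=\int f(x)e^{-2\pi i\omega x}dx$; $\|g\|_J^2=\int_J|g|^2$. Riesz basis with constants $d_1,d_2$: $d_1\sum|a_n|^2\le\|\sum a_n\varphi_n\|^2\le d_2\sum|a_n|^2$ for all coefficients. $E(\mathcal U,z)=\sup\{\|\hat f\|_{\mathbb R\setminus(-z,z)}:f\in\mathcal U,\|f\|=1\}$. A sequence $\{\omega_n\}_{n\in\mathbb Z}$ gives rise to a Fourier frame for $\mathcal H$ if there are $0<A\le B<\infty$ with $A\|f\|^2\le\sum_n|\hat f(\omega_n)|^2\le B\|f\|^2$ for all $f\in\mathcal H$; then $\tilde E(\mathcal U,N)^2=\sup\{\sum_{|n|>N}|\hat f(\omega_n)|^2:f\in\mathcal U,\|f\|=1\}$. *)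

theory Defs
  imports "HOL-Analysis.Analysis"
begin

text \<open>Elements of H = L2 functions supported in [0,1] (represented by a
representative vanishing outside [0,1]).\<close>
definition inH :: "(real \<Rightarrow> complex) \<Rightarrow> bool" where
  "inH f \<longleftrightarrow> f \<in> borel_measurable lborel
     \<and> integrable lborel (\<lambda>x. (cmod (f x))\<^sup>2)
     \<and> (\<forall>x. x \<notin> {0..1} \<longrightarrow> f x = 0)"

definition L2norm :: "(real \<Rightarrow> complex) \<Rightarrow> real" where
  "L2norm f = sqrt (LINT x|lborel. (cmod (f x))\<^sup>2)"

definition normOn :: "real set \<Rightarrow> (real \<Rightarrow> complex) \<Rightarrow> real" where
  "normOn J g = sqrt (LINT x:J|lborel. (cmod (g x))\<^sup>2)"

definition FT :: "(real \<Rightarrow> complex) \<Rightarrow> real \<Rightarrow> complex" where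
  "FT f \<omega> = (LINT x|lborel. f x * cis (- 2 * pi * \<omega> * x))"

definition fspan :: "(nat \<Rightarrow> real \<Rightarrow> complex) \<Rightarrow> nat set \<Rightarrow> (real \<Rightarrow> complex) set" where
  "fspan \<phi> S = {(\<lambda>x. \<Sum>n\<in>S. a n * \<phi> n x) | a. True}"

definition riesz_basis_consts ::
  "(nat \<Rightarrow> real \<Rightarrow> complex) \<Rightarrow> nat set \<Rightarrow> real \<Rightarrow> real \<Rightarrow> bool" where
  "riesz_basis_consts \<phi> I d1 d2 \<longleftrightarrow> 0 < d1 \<and> d1 \<le> d2 \<and>
     (\<forall>a::nat \<Rightarrow> complex.
        d1 * (\<Sum>n\<in>I. (cmod (a n))\<^sup>2) \<le> (L2norm (\<lambda>x. \<Sum>n\<in>I. a n * \<phi> n x))\<^sup>2 \<and>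
        (L2norm (\<lambda>x. \<Sum>n\<in>I. a n * \<phi> n x))\<^sup>2 \<le> d2 * (\<Sum>n\<in>I. (cmod (a n))\<^sup>2))"

text \<open>E(U,z); the supremum of an empty set of nonnegative numbers is taken to be 0.\<close>
definition Econc :: "(real \<Rightarrow> complex) set \<Rightarrow> real \<Rightarrow> real" where
  "Econc U z = Sup (insert 0 {normOn (- {-z<..<z}) (FT f) | f. f \<in> U \<and> L2norm f = 1})"

definition fourier_frame :: "(int \<Rightarrow> real) \<Rightarrow> bool" where
  "fourier_frame \<omega> \<longleftrightarrow> (\<exists>A B. 0 < A \<and> A \<le> B \<and>
     (\<forall>f. inH f \<longrightarrow>
        (\<lambda>n. (cmod (FT f (\<omega> n)))\<^sup>2) summable_on UNIV \<and>
        A * (L2norm f)\<^sup>2 \<le> (\<Sum>\<^sub>\<infinity>n. (cmod (FT f (\<omega> n)))\<^sup>2) \<and>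
        (\<Sum>\<^sub>\<infinity>n. (cmod (FT f (\<omega> n)))\<^sup>2) \<le> B * (L2norm f)\<^sup>2))"

definition Etilde :: "(int \<Rightarrow> real) \<Rightarrow> (real \<Rightarrow> complex) set \<Rightarrow> nat \<Rightarrow> real" where
  "Etilde \<omega> U N = sqrt (Sup (insert 0
     {(\<Sum>\<^sub>\<infinity>n\<in>{n. \<bar>n\<bar> > int N}. (cmod (FT f (\<omega> n)))\<^sup>2) | f. f \<in> U \<and> L2norm f = 1}))"

end

theory Submission
  imports Defs
begin

text \<open>Write \<open>f = f\<^sub>1 + \<dots> + f\<^sub>r\<close> with \<open>f\<^sub>i \<in> T\<^sub>i\<close>. Both concentration measures are the \<open>L\<^sup>2\<close>-norm of a
  linear image of \<open>f\<close> (the Fourier transform restricted to \<open>|\<omega>| \<ge> z\<close>, resp. the Fourier samples with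
  \<open>|n| > N\<close>), hence subadditive and homogeneous, so the contribution of \<open>f\<^sub>i = \<Sum>\<^sub>n\<^sub>\<in>\<^sub>I\<^sub>i a\<^sub>n \<phi>\<^sub>n\<close> is at most
  \<open>E(T\<^sub>i) \<parallel>f\<^sub>i\<parallel> \<le> E(T\<^sub>i) sqrt (d\<^sub>2 \<Sum>\<^sub>n\<^sub>\<in>\<^sub>I\<^sub>i |a\<^sub>n|\<^sup>2)\<close>. Cauchy-Schwarz over \<open>i\<close> and the lower Riesz
  bound \<open>\<Sum>\<^sub>n |a\<^sub>n|\<^sup>2 \<le> 1/d\<^sub>1\<close> for \<open>\<parallel>f\<parallel> = 1\<close> give the estimate. The one analytic input is that the
  suprema are finite, i.e. that \<open>|FT g|\<^sup>2\<close> is integrable for \<open>g\<close> in \<open>H\<close>; this follows from Bessel's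
  inequality for the exponentials \<open>exp (2\<pi>i (t + k) x)\<close>, \<open>k \<in> \<int>\<close>, on \<open>[0, 1]\<close>, integrated over \<open>t\<close>.\<close>

section \<open>Square-integrable functions\<close>

lemma Cauchy_Schwarz_integral_nonneg:
  fixes u v :: "'a \<Rightarrow> real"
  assumes [measurable]: "u \<in> borel_measurable M" "v \<in> borel_measurable M"
    and iu: "integrable M (\<lambda>x. (u x)\<^sup>2)" and iv: "integrable M (\<lambda>x. (v x)\<^sup>2)"
    and nu: "\<And>x. u x \<ge> 0" and nv: "\<And>x. v x \<ge> 0"
  shows "integrable M (\<lambda>x. u x * v x)"
    and "(LINT x|M. u x * v x) \<le> sqrt (LINT x|M. (u x)\<^sup>2) * sqrt (LINT x|M. (v x)\<^sup>2)"
proof -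
  show i: "integrable M (\<lambda>x. u x * v x)"
  proof (rule Bochner_Integration.integrable_bound[of _ "\<lambda>x. (u x)\<^sup>2 + (v x)\<^sup>2"])
    show "AE x in M. norm (u x * v x) \<le> norm ((u x)\<^sup>2 + (v x)\<^sup>2)"
    proof (rule AE_I2)
      fix x
      have "2 * u x * v x \<le> (u x)\<^sup>2 + (v x)\<^sup>2" by (rule sum_squares_bound)
      moreover have "0 \<le> u x * v x" using nu nv by simp
      ultimately show "norm (u x * v x) \<le> norm ((u x)\<^sup>2 + (v x)\<^sup>2)" by simp
    qed
  qed (use iu iv in simp_all)
  have square: "ennreal (LINT x|M. (w x)\<^sup>2) = (\<integral>\<^sup>+x. ennreal (w x) ^ 2 \<partial>M)"
    if "integrable M (\<lambda>x. (w x)\<^sup>2)" "\<And>x. w x \<ge> 0" for w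
    using that by (simp add: nn_integral_eq_integral ennreal_power)
  have "(ennreal (LINT x|M. u x * v x))\<^sup>2 \<le> ennreal (LINT x|M. (u x)\<^sup>2) * ennreal (LINT x|M. (v x)\<^sup>2)"
    unfolding square[OF iu nu] square[OF iv nv]
    using i nu nv Cauchy_Schwarz_nn_integral[of u M v]
    by (simp add: nn_integral_eq_integral ennreal_mult[symmetric])
  moreover have "0 \<le> (LINT x|M. u x * v x)" using nu nv by (intro integral_nonneg_AE) auto
  moreover have "0 \<le> (LINT x|M. (u x)\<^sup>2)" "0 \<le> (LINT x|M. (v x)\<^sup>2)" by auto
  ultimately have "(LINT x|M. u x * v x)\<^sup>2 \<le> (LINT x|M. (u x)\<^sup>2) * (LINT x|M. (v x)\<^sup>2)"
    by (metis ennreal_le_iff ennreal_mult ennreal_power zero_le_power2 mult_nonneg_nonneg)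
  then show "(LINT x|M. u x * v x) \<le> sqrt (LINT x|M. (u x)\<^sup>2) * sqrt (LINT x|M. (v x)\<^sup>2)"
    by (metis real_le_rsqrt real_sqrt_mult)
qed

definition square_integrable :: "'a measure \<Rightarrow> ('a \<Rightarrow> complex) \<Rightarrow> bool" where
  "square_integrable M u \<longleftrightarrow> u \<in> borel_measurable M \<and> integrable M (\<lambda>x. (cmod (u x))\<^sup>2)"

definition L2_seminorm :: "'a measure \<Rightarrow> ('a \<Rightarrow> complex) \<Rightarrow> real" where
  "L2_seminorm M u = sqrt (LINT x|M. (cmod (u x))\<^sup>2)"

lemma L2_seminorm_nonneg: "L2_seminorm M u \<ge> 0"
  unfolding L2_seminorm_def by simp

lemma L2norm_eq_L2_seminorm: "L2norm f = L2_seminorm lborel f"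
  by (simp add: L2norm_def L2_seminorm_def)

lemma L2_seminorm_scale: "L2_seminorm M (\<lambda>x. c * u x) = cmod c * L2_seminorm M u"
  by (simp add: L2_seminorm_def norm_mult power_mult_distrib real_sqrt_mult)

lemma square_integrable_scale:
  assumes "square_integrable M u"
  shows "square_integrable M (\<lambda>x. c * u x)"
proof -
  have [measurable]: "u \<in> borel_measurable M" using assms by (simp add: square_integrable_def)
  show ?thesis using assms by (simp add: square_integrable_def norm_mult power_mult_distrib)
qed

lemma
  assumes "square_integrable M u" "square_integrable M v"
  shows square_integrable_add: "square_integrable M (\<lambda>x. u x + v x)"
    and L2_seminorm_add_le: "L2_seminorm M (\<lambda>x. u x + v x) \<le> L2_seminorm M u + L2_seminorm M v"
proof -
  have [measurable]: "u \<in> borel_measurable M" "v \<in> borel_measurable M"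
    and iu: "integrable M (\<lambda>x. (cmod (u x))\<^sup>2)" and iv: "integrable M (\<lambda>x. (cmod (v x))\<^sup>2)"
    using assms by (auto simp: square_integrable_def)
  note cs = Cauchy_Schwarz_integral_nonneg[of "\<lambda>x. cmod (u x)" M "\<lambda>x. cmod (v x)", OF _ _ iu iv]
  have expand: "(cmod (u x) + cmod (v x))\<^sup>2
      = (cmod (u x))\<^sup>2 + (cmod (v x))\<^sup>2 + 2 * (cmod (u x) * cmod (v x))" for x
    by (simp add: power2_sum)
  have isum: "integrable M (\<lambda>x. (cmod (u x) + cmod (v x))\<^sup>2)"
    unfolding expand using iu iv cs(1) by simp
  have pointwise: "(cmod (u x + v x))\<^sup>2 \<le> (cmod (u x) + cmod (v x))\<^sup>2" for x
    by (simp add: norm_triangle_ineq power_mono)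
  have iw: "integrable M (\<lambda>x. (cmod (u x + v x))\<^sup>2)"
    by (rule Bochner_Integration.integrable_bound[OF isum]) (use pointwise in auto)
  then show "square_integrable M (\<lambda>x. u x + v x)" by (simp add: square_integrable_def)
  have "(LINT x|M. (cmod (u x + v x))\<^sup>2) \<le> (LINT x|M. (cmod (u x) + cmod (v x))\<^sup>2)"
    by (rule integral_mono[OF iw isum pointwise])
  also have "\<dots> = (LINT x|M. (cmod (u x))\<^sup>2) + (LINT x|M. (cmod (v x))\<^sup>2)
      + 2 * (LINT x|M. cmod (u x) * cmod (v x))"
    unfolding expand using iu iv cs(1) by simp
  also have "\<dots> \<le> (L2_seminorm M u)\<^sup>2 + (L2_seminorm M v)\<^sup>2 + 2 * (L2_seminorm M u * L2_seminorm M v)"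
    using cs(2) by (simp add: L2_seminorm_def)
  also have "\<dots> = (L2_seminorm M u + L2_seminorm M v)\<^sup>2" by (simp add: power2_sum)
  finally have "sqrt (LINT x|M. (cmod (u x + v x))\<^sup>2) \<le> sqrt ((L2_seminorm M u + L2_seminorm M v)\<^sup>2)"
    by (rule real_sqrt_le_mono)
  then show "L2_seminorm M (\<lambda>x. u x + v x) \<le> L2_seminorm M u + L2_seminorm M v"
    by (simp add: L2_seminorm_def[of M "\<lambda>x. u x + v x"] L2_seminorm_nonneg)
qed

lemma
  assumes "finite S" "\<And>i. i \<in> S \<Longrightarrow> square_integrable M (u i)"
  shows square_integrable_sum: "square_integrable M (\<lambda>x. \<Sum>i\<in>S. u i x)"
    and L2_seminorm_sum_le: "L2_seminorm M (\<lambda>x. \<Sum>i\<in>S. u i x) \<le> (\<Sum>i\<in>S. L2_seminorm M (u i))"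
proof -
  have "square_integrable M (\<lambda>x. \<Sum>i\<in>S. u i x)
    \<and> L2_seminorm M (\<lambda>x. \<Sum>i\<in>S. u i x) \<le> (\<Sum>i\<in>S. L2_seminorm M (u i))"
    using assms
  proof (induction S rule: finite_induct)
    case empty
    then show ?case by (simp add: square_integrable_def L2_seminorm_def)
  next
    case (insert a S)
    then have IH: "square_integrable M (\<lambda>x. \<Sum>i\<in>S. u i x)"
        "L2_seminorm M (\<lambda>x. \<Sum>i\<in>S. u i x) \<le> (\<Sum>i\<in>S. L2_seminorm M (u i))"
      and ua: "square_integrable M (u a)" by auto
    show ?case
      using square_integrable_add[OF ua IH(1)] L2_seminorm_add_le[OF ua IH(1)] IH(2) insert.hyps
      by simp
  qed
  then show "square_integrable M (\<lambda>x. \<Sum>i\<in>S. u i x)"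
    and "L2_seminorm M (\<lambda>x. \<Sum>i\<in>S. u i x) \<le> (\<Sum>i\<in>S. L2_seminorm M (u i))"
    by simp_all
qed

lemma
  assumes "finite S" "\<And>n. n \<in> S \<Longrightarrow> square_integrable M (\<Psi> n)"
  shows square_integrable_lincomb: "square_integrable M (\<lambda>x. \<Sum>n\<in>S. a n * \<Psi> n x)"
    and L2_seminorm_lincomb_le:
      "L2_seminorm M (\<lambda>x. \<Sum>n\<in>S. a n * \<Psi> n x) \<le> (\<Sum>n\<in>S. cmod (a n) * L2_seminorm M (\<Psi> n))"
  using square_integrable_sum[of S M "\<lambda>n x. a n * \<Psi> n x"]
    L2_seminorm_sum_le[of S M "\<lambda>n x. a n * \<Psi> n x"] assms
  by (auto simp: square_integrable_scale L2_seminorm_scale)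

lemma integrable_count_space_if_summable_on:
  fixes h :: "'a \<Rightarrow> real"
  assumes "h summable_on A"
  shows "integrable (count_space A) h"
proof -
  have "(\<lambda>x. norm (h x)) summable_on A" using assms summable_on_iff_abs_summable_on_real by blast
  then have "Infinite_Set_Sum.abs_summable_on h A" using abs_summable_equivalent by blast
  then show ?thesis by (simp add: Infinite_Set_Sum.abs_summable_on_def)
qed

lemma infsum_eq_integral_count_space:
  fixes h :: "'a \<Rightarrow> real"
  assumes "integrable (count_space A) h"
  shows "infsum h A = (LINT x|count_space A. h x)"
proof -
  have "Infinite_Set_Sum.abs_summable_on h A" using assms by (simp add: Infinite_Set_Sum.abs_summable_on_def)
  then have "infsetsum h A = infsum h A" by (rule infsetsum_infsum)
  then show ?thesis by (simp add: infsetsum_def)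
qed

section \<open>Riesz sequences and concentration functionals\<close>

lemma riesz_basis_consts_subset:
  assumes rb: "riesz_basis_consts \<phi> I d1 d2" and fin: "finite I" and S: "S \<subseteq> I"
  shows "riesz_basis_consts \<phi> S d1 d2"
  unfolding riesz_basis_consts_def
proof (intro conjI allI)
  show "0 < d1" "d1 \<le> d2" using rb by (auto simp: riesz_basis_consts_def)
next
  fix a :: "nat \<Rightarrow> complex"
  define b where "b n = (if n \<in> S then a n else 0)" for n
  have restrict: "(\<Sum>n\<in>I. if n \<in> S then g n else 0) = (\<Sum>n\<in>S. g n)" for g :: "nat \<Rightarrow> 'c::comm_monoid_add"
    using sum.inter_restrict[OF fin, of g S] S by (simp add: Int_absorb1)
  have "(\<lambda>x. \<Sum>n\<in>I. b n * \<phi> n x) = (\<lambda>x. \<Sum>n\<in>S. a n * \<phi> n x)"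
  proof
    fix x
    have "(\<Sum>n\<in>I. b n * \<phi> n x) = (\<Sum>n\<in>I. if n \<in> S then a n * \<phi> n x else 0)"
      by (rule sum.cong) (simp_all add: b_def)
    then show "(\<Sum>n\<in>I. b n * \<phi> n x) = (\<Sum>n\<in>S. a n * \<phi> n x)" using restrict by simp
  qed
  moreover have "(\<Sum>n\<in>I. (cmod (b n))\<^sup>2) = (\<Sum>n\<in>I. if n \<in> S then (cmod (a n))\<^sup>2 else 0)"
    by (rule sum.cong) (simp_all add: b_def)
  moreover note rb[unfolded riesz_basis_consts_def, THEN conjunct2, THEN conjunct2, rule_format, of b]
  ultimately show "d1 * (\<Sum>n\<in>S. (cmod (a n))\<^sup>2) \<le> (L2norm (\<lambda>x. \<Sum>n\<in>S. a n * \<phi> n x))\<^sup>2"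
    and "(L2norm (\<lambda>x. \<Sum>n\<in>S. a n * \<phi> n x))\<^sup>2 \<le> d2 * (\<Sum>n\<in>S. (cmod (a n))\<^sup>2)"
    by (simp_all add: restrict)
qed

lemma riesz_basis_consts_coeffs_le:
  assumes "riesz_basis_consts \<phi> S d1 d2" "L2norm (\<lambda>x. \<Sum>n\<in>S. a n * \<phi> n x) = 1"
  shows "(\<Sum>n\<in>S. (cmod (a n))\<^sup>2) \<le> 1 / d1"
proof -
  have "d1 * (\<Sum>n\<in>S. (cmod (a n))\<^sup>2) \<le> (L2norm (\<lambda>x. \<Sum>n\<in>S. a n * \<phi> n x))\<^sup>2"
    and "0 < d1"
    using assms(1) unfolding riesz_basis_consts_def by blast+
  with assms(2) show ?thesis by (simp add: field_simps)
qed

lemma cSup_insert_0_upper: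
  fixes Y :: "real set"
  assumes "bdd_above Y" "y \<in> Y"
  shows "y \<le> Sup (insert 0 Y)"
  using assms by (intro cSup_upper) auto

lemma cSup_insert_0_least:
  fixes Y :: "real set"
  assumes "0 \<le> B" "\<And>y. y \<in> Y \<Longrightarrow> y \<le> B"
  shows "Sup (insert 0 Y) \<le> B"
  using assms by (intro cSup_least) auto

lemma sqrt_Sup_insert_0_power2:
  fixes g :: "'a \<Rightarrow> real"
  assumes nonneg: "\<And>x. x \<in> X \<Longrightarrow> 0 \<le> g x" and bdd: "bdd_above (g ` X)"
  shows "sqrt (Sup (insert 0 ((\<lambda>x. (g x)\<^sup>2) ` X))) = Sup (insert 0 (g ` X))"
proof -
  define s where "s = Sup (insert 0 (g ` X))"
  have g_le_s: "g x \<le> s" if "x \<in> X" for x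
    unfolding s_def using bdd that by (intro cSup_insert_0_upper) auto
  have s0: "0 \<le> s" unfolding s_def using bdd by (intro cSup_upper) auto
  have square_le: "(g x)\<^sup>2 \<le> s\<^sup>2" if "x \<in> X" for x
    using g_le_s[OF that] nonneg[OF that] by (simp add: power_mono)
  have bdd2: "bdd_above ((\<lambda>x. (g x)\<^sup>2) ` X)"
    using square_le by (intro bdd_aboveI2)
  show ?thesis
  proof (rule antisym)
    have "Sup (insert 0 ((\<lambda>x. (g x)\<^sup>2) ` X)) \<le> s\<^sup>2"
      using square_le by (intro cSup_insert_0_least) auto
    then show "sqrt (Sup (insert 0 ((\<lambda>x. (g x)\<^sup>2) ` X))) \<le> Sup (insert 0 (g ` X))"
      unfolding s_def[symmetric] by (rule real_le_lsqrt[OF s0])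
  next
    have "g x \<le> sqrt (Sup (insert 0 ((\<lambda>x. (g x)\<^sup>2) ` X)))" if "x \<in> X" for x
      using cSup_insert_0_upper[OF bdd2 imageI[OF that]] nonneg[OF that] real_le_rsqrt by blast
    moreover have "0 \<le> Sup (insert 0 ((\<lambda>x. (g x)\<^sup>2) ` X))"
      using bdd2 by (intro cSup_upper) auto
    ultimately show "Sup (insert 0 (g ` X)) \<le> sqrt (Sup (insert 0 ((\<lambda>x. (g x)\<^sup>2) ` X)))"
      by (intro cSup_insert_0_least) auto
  qed
qed

lemma sum_over_partition:
  assumes "finite I" "finite R" "disjoint_family_on P R" "(\<Union>i\<in>R. P i) = I"
  shows "(\<Sum>n\<in>I. h n) = (\<Sum>i\<in>R. \<Sum>n\<in>P i. h n)"
proof -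
  have "\<forall>i\<in>R. finite (P i)" using assms(4) finite_subset[OF _ assms(1)] by auto
  then show ?thesis using sum.UNION_disjoint_family[OF assms(2) _ assms(3), of h] assms(4) by simp
qed

text \<open>\<open>V f\<close> is the \<open>L\<^sup>2(M)\<close>-norm of the image of \<open>f\<close> under the linear map sending \<open>\<phi> n\<close> to
  \<open>\<Psi> n\<close>; both concentration measures are of this form.\<close>
locale riesz_L2_functional =
  fixes \<phi> :: "nat \<Rightarrow> real \<Rightarrow> complex" and I :: "nat set" and d1 d2 :: real
    and M :: "'b measure" and \<Psi> :: "nat \<Rightarrow> 'b \<Rightarrow> complex" and V :: "(real \<Rightarrow> complex) \<Rightarrow> real"
  assumes finite_I: "finite I" and riesz: "riesz_basis_consts \<phi> I d1 d2"
    and square_integrable_\<Psi>: "\<And>n. n \<in> I \<Longrightarrow> square_integrable M (\<Psi> n)"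
    and V_lincomb: "\<And>S a. S \<subseteq> I \<Longrightarrow>
      V (\<lambda>x. \<Sum>n\<in>S. a n * \<phi> n x) = L2_seminorm M (\<lambda>w. \<Sum>n\<in>S. a n * \<Psi> n w)"
begin

lemma d1_pos: "0 < d1" and d1_le_d2: "d1 \<le> d2"
  using riesz by (auto simp: riesz_basis_consts_def)

lemma V_lincomb_scale:
  assumes "S \<subseteq> I"
  shows "V (\<lambda>x. \<Sum>n\<in>S. (c * a n) * \<phi> n x) = cmod c * V (\<lambda>x. \<Sum>n\<in>S. a n * \<phi> n x)"
  using V_lincomb[OF assms, of "\<lambda>n. c * a n"] V_lincomb[OF assms, of a]
    L2_seminorm_scale[of M c "\<lambda>w. \<Sum>n\<in>S. a n * \<Psi> n w"]
  by (simp add: sum_distrib_left mult.assoc)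

lemma V_unit_le:
  assumes S: "S \<subseteq> I" and f: "f \<in> fspan \<phi> S" "L2norm f = 1"
  shows "V f \<le> sqrt (1 / d1) * sqrt (\<Sum>n\<in>I. (L2_seminorm M (\<Psi> n))\<^sup>2)"
proof -
  have finS: "finite S" using finite_I S finite_subset by blast
  obtain a where fa: "f = (\<lambda>x. \<Sum>n\<in>S. a n * \<phi> n x)" using f(1) unfolding fspan_def by blast
  have "V f \<le> (\<Sum>n\<in>S. \<bar>cmod (a n)\<bar> * \<bar>L2_seminorm M (\<Psi> n)\<bar>)"
    unfolding fa V_lincomb[OF S]
    using L2_seminorm_lincomb_le[OF finS, of M \<Psi> a] square_integrable_\<Psi> S
    by (auto simp: L2_seminorm_nonneg)
  also have "\<dots> \<le> L2_set (\<lambda>n. cmod (a n)) S * L2_set (\<lambda>n. L2_seminorm M (\<Psi> n)) S"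
    by (rule L2_set_mult_ineq)
  also have "\<dots> \<le> sqrt (1 / d1) * sqrt (\<Sum>n\<in>I. (L2_seminorm M (\<Psi> n))\<^sup>2)"
    unfolding L2_set_def
  proof (rule mult_mono)
    show "sqrt (\<Sum>n\<in>S. (cmod (a n))\<^sup>2) \<le> sqrt (1 / d1)"
      using riesz_basis_consts_coeffs_le[OF riesz_basis_consts_subset[OF riesz finite_I S]] f(2) fa
      by simp
    show "sqrt (\<Sum>n\<in>S. (L2_seminorm M (\<Psi> n))\<^sup>2) \<le> sqrt (\<Sum>n\<in>I. (L2_seminorm M (\<Psi> n))\<^sup>2)"
      using sum_mono2[OF finite_I S, of "\<lambda>n. (L2_seminorm M (\<Psi> n))\<^sup>2"] by simp
  qed (use d1_pos in \<open>simp_all add: sum_nonneg\<close>)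
  finally show ?thesis .
qed

lemma bdd_above_V_unit:
  assumes "S \<subseteq> I"
  shows "bdd_above (V ` {f \<in> fspan \<phi> S. L2norm f = 1})"
proof (rule bdd_aboveI2)
  fix f assume "f \<in> {f \<in> fspan \<phi> S. L2norm f = 1}"
  then show "V f \<le> sqrt (1 / d1) * sqrt (\<Sum>n\<in>I. (L2_seminorm M (\<Psi> n))\<^sup>2)"
    using V_unit_le[OF assms] by simp
qed

lemma V_nonneg:
  assumes "S \<subseteq> I" "f \<in> fspan \<phi> S"
  shows "0 \<le> V f"
proof -
  obtain a where "f = (\<lambda>x. \<Sum>n\<in>S. a n * \<phi> n x)" using assms(2) unfolding fspan_def by blast
  then show ?thesis using V_lincomb[OF assms(1), of a] by (simp add: L2_seminorm_nonneg)
qed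

lemma V_lincomb_le:
  assumes S: "S \<subseteq> I" and E: "\<And>f. f \<in> fspan \<phi> S \<Longrightarrow> L2norm f = 1 \<Longrightarrow> V f \<le> E"
  shows "V (\<lambda>x. \<Sum>n\<in>S. a n * \<phi> n x) \<le> \<bar>E\<bar> * sqrt (d2 * (\<Sum>n\<in>S. (cmod (a n))\<^sup>2))"
proof -
  define L where "L = L2norm (\<lambda>x. \<Sum>n\<in>S. a n * \<phi> n x)"
  define s where "s = (\<Sum>n\<in>S. (cmod (a n))\<^sup>2)"
  have rbS: "riesz_basis_consts \<phi> S d1 d2" by (rule riesz_basis_consts_subset[OF riesz finite_I S])
  have lower: "d1 * s \<le> L\<^sup>2" and upper: "L\<^sup>2 \<le> d2 * s"
    using rbS by (auto simp: riesz_basis_consts_def L_def s_def)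
  have L0: "0 \<le> L" unfolding L_def L2norm_eq_L2_seminorm by (rule L2_seminorm_nonneg)
  have V0: "0 \<le> V (\<lambda>x. \<Sum>n\<in>S. a n * \<phi> n x)"
    by (rule V_nonneg[OF S]) (auto simp: fspan_def)
  show ?thesis
  proof (cases "L = 0")
    case True
    have "0 \<le> s" by (simp add: s_def sum_nonneg)
    moreover have "s \<le> 0" using lower d1_pos True by (simp add: mult_le_0_iff)
    ultimately have "s = 0" by simp
    then have "\<forall>n\<in>S. a n = 0"
      using finite_subset[OF S finite_I] by (simp add: s_def sum_nonneg_eq_0_iff)
    then show ?thesis using V_lincomb[OF S, of a] by (simp add: L2_seminorm_def)
  next
    case False
    then have Lpos: "0 < L" using L0 by simp
    define c where "c = complex_of_real (1 / L)"
    have "L2norm (\<lambda>x. \<Sum>n\<in>S. (c * a n) * \<phi> n x) = cmod c * L"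
      unfolding L_def L2norm_eq_L2_seminorm
      by (simp add: sum_distrib_left mult.assoc L2_seminorm_scale[symmetric])
    also have "\<dots> = 1" using Lpos by (simp add: c_def norm_divide)
    finally have "V (\<lambda>x. \<Sum>n\<in>S. (c * a n) * \<phi> n x) \<le> E"
      by (intro E) (auto simp: fspan_def)
    then have "V (\<lambda>x. \<Sum>n\<in>S. a n * \<phi> n x) / L \<le> E"
      unfolding V_lincomb_scale[OF S] using Lpos by (simp add: c_def norm_divide)
    then have "V (\<lambda>x. \<Sum>n\<in>S. a n * \<phi> n x) \<le> E * L"
      using Lpos by (simp add: divide_le_eq)
    also have "\<dots> \<le> \<bar>E\<bar> * sqrt (d2 * s)"
      using upper L0 by (intro mult_mono) (auto simp: real_le_rsqrt)
    finally show ?thesis unfolding s_def .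
  qed
qed

lemma V_le_sum_pieces:
  assumes R: "finite R" "disjoint_family_on P R" "(\<Union>i\<in>R. P i) = I"
  shows "V (\<lambda>x. \<Sum>n\<in>I. a n * \<phi> n x) \<le> (\<Sum>i\<in>R. V (\<lambda>x. \<Sum>n\<in>P i. a n * \<phi> n x))"
proof -
  have PI: "P i \<subseteq> I" if "i \<in> R" for i using R(3) that by blast
  have "V (\<lambda>x. \<Sum>n\<in>I. a n * \<phi> n x) = L2_seminorm M (\<lambda>w. \<Sum>n\<in>I. a n * \<Psi> n w)"
    by (rule V_lincomb) simp
  also have "\<dots> = L2_seminorm M (\<lambda>w. \<Sum>i\<in>R. \<Sum>n\<in>P i. a n * \<Psi> n w)"
    by (simp only: sum_over_partition[OF finite_I R])
  also have "\<dots> \<le> (\<Sum>i\<in>R. L2_seminorm M (\<lambda>w. \<Sum>n\<in>P i. a n * \<Psi> n w))"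
  proof (rule L2_seminorm_sum_le[OF R(1)])
    show "square_integrable M (\<lambda>w. \<Sum>n\<in>P i. a n * \<Psi> n w)" if "i \<in> R" for i
      using PI[OF that] finite_subset[OF PI[OF that] finite_I] square_integrable_\<Psi>
      by (intro square_integrable_lincomb) auto
  qed
  also have "\<dots> = (\<Sum>i\<in>R. V (\<lambda>x. \<Sum>n\<in>P i. a n * \<phi> n x))"
    using PI by (simp add: V_lincomb)
  finally show ?thesis .
qed

lemma V_le_partition:
  assumes R: "finite R" "disjoint_family_on P R" "(\<Union>i\<in>R. P i) = I"
    and E: "\<And>i f. i \<in> R \<Longrightarrow> f \<in> fspan \<phi> (P i) \<Longrightarrow> L2norm f = 1 \<Longrightarrow> V f \<le> E i"
    and f: "f \<in> fspan \<phi> I" "L2norm f = 1"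
  shows "V f \<le> sqrt (d2 / d1 * (\<Sum>i\<in>R. (E i)\<^sup>2))"
proof -
  obtain a where fa: "f = (\<lambda>x. \<Sum>n\<in>I. a n * \<phi> n x)" using f(1) unfolding fspan_def by blast
  define s where "s i = (\<Sum>n\<in>P i. (cmod (a n))\<^sup>2)" for i
  have ds0: "0 \<le> d2 * s i" for i using d1_pos d1_le_d2 by (simp add: s_def sum_nonneg)
  have PI: "P i \<subseteq> I" if "i \<in> R" for i using R(3) that by blast
  have piece: "V (\<lambda>x. \<Sum>n\<in>P i. a n * \<phi> n x) \<le> \<bar>E i\<bar> * \<bar>sqrt (d2 * s i)\<bar>" if "i \<in> R" for i
    using V_lincomb_le[OF PI[OF that], of "E i" a] E[OF that] ds0[of i]
    by (simp add: s_def)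
  have "V f \<le> (\<Sum>i\<in>R. V (\<lambda>x. \<Sum>n\<in>P i. a n * \<phi> n x))"
    unfolding fa by (rule V_le_sum_pieces[OF R])
  also have "\<dots> \<le> (\<Sum>i\<in>R. \<bar>E i\<bar> * \<bar>sqrt (d2 * s i)\<bar>)"
    using piece by (rule sum_mono)
  also have "\<dots> \<le> L2_set E R * L2_set (\<lambda>i. sqrt (d2 * s i)) R"
    by (rule L2_set_mult_ineq)
  also have "L2_set (\<lambda>i. sqrt (d2 * s i)) R = sqrt (d2 * (\<Sum>n\<in>I. (cmod (a n))\<^sup>2))"
    unfolding L2_set_def real_sqrt_pow2[OF ds0] sum_over_partition[OF finite_I R]
    by (simp add: s_def sum_distrib_left)
  also have "\<dots> \<le> sqrt (d2 * (1 / d1))"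
  proof -
    have "(\<Sum>n\<in>I. (cmod (a n))\<^sup>2) \<le> 1 / d1"
      using riesz_basis_consts_coeffs_le[OF riesz, of a] f(2) fa by simp
    then show ?thesis using d1_pos d1_le_d2 by (intro real_sqrt_le_mono mult_left_mono) simp_all
  qed
  finally have "V f \<le> L2_set E R * sqrt (d2 * (1 / d1))"
    by (simp add: mult_left_mono L2_set_nonneg)
  also have "\<dots> = sqrt (d2 / d1 * (\<Sum>i\<in>R. (E i)\<^sup>2))"
    unfolding L2_set_def real_sqrt_mult[symmetric] by (simp add: mult.commute)
  finally show ?thesis .
qed

lemma Sup_V_unit_partition_le:
  assumes R: "finite R" "disjoint_family_on P R" "(\<Union>i\<in>R. P i) = I"
  shows "Sup (insert 0 (V ` {f \<in> fspan \<phi> I. L2norm f = 1}))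
    \<le> sqrt (d2 / d1 * (\<Sum>i\<in>R. (Sup (insert 0 (V ` {f \<in> fspan \<phi> (P i). L2norm f = 1})))\<^sup>2))"
proof (rule cSup_insert_0_least)
  show "0 \<le> sqrt (d2 / d1 * (\<Sum>i\<in>R. (Sup (insert 0 (V ` {f \<in> fspan \<phi> (P i). L2norm f = 1})))\<^sup>2))"
    using d1_pos d1_le_d2 by (simp add: sum_nonneg)
  have pieces: "V f \<le> Sup (insert 0 (V ` {f \<in> fspan \<phi> (P i). L2norm f = 1}))"
    if "i \<in> R" "f \<in> fspan \<phi> (P i)" "L2norm f = 1" for i f
    using R(3) that by (intro cSup_insert_0_upper bdd_above_V_unit) auto
  fix y assume "y \<in> V ` {f \<in> fspan \<phi> I. L2norm f = 1}"
  then obtain f where "y = V f" "f \<in> fspan \<phi> I" "L2norm f = 1" by blast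
  then show "y \<le> sqrt (d2 / d1 * (\<Sum>i\<in>R. (Sup (insert 0 (V ` {f \<in> fspan \<phi> (P i). L2norm f = 1})))\<^sup>2))"
    using V_le_partition[OF R pieces] by simp
qed

end

section \<open>Fourier transforms of functions in H\<close>

lemma integral_cis_unit_interval:
  fixes m :: int
  shows "(LINT x|lborel. indicator {0..1::real} x *\<^sub>R cis (2*pi*m*x)) = (if m = 0 then 1 else 0)"
proof (cases "m = 0")
  case True
  then show ?thesis by (simp add: indicator_scaleR_eq_if)
next
  case False
  define F where "F x = cis (2*pi*m*x) / (\<i> * (2*pi*m))" for x :: real
  have d: "(F has_vector_derivative cis (2*pi*m*x)) (at x within A)" for x A
  proof -
    have "((\<lambda>x. cis (2*pi*m*x)) has_derivative (\<lambda>t. (t * (2*pi*m)) *\<^sub>R (\<i> * cis (2*pi*m*x)))) (at x within A)"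
      by (rule has_derivative_cis) (auto intro!: derivative_eq_intros)
    then have "((\<lambda>x. cis (2*pi*m*x) / (\<i> * (2*pi*m))) has_derivative
        (\<lambda>t. (t * (2*pi*m)) *\<^sub>R (\<i> * cis (2*pi*m*x)) / (\<i> * (2*pi*m)))) (at x within A)"
      using False by (intro derivative_eq_intros) auto
    moreover have "(\<lambda>t. (t * (2*pi*m)) *\<^sub>R (\<i> * cis (2*pi*m*x)) / (\<i> * (2*pi*m))) = (\<lambda>t. t *\<^sub>R cis (2*pi*m*x))"
      using False by (auto simp: scaleR_conv_of_real field_simps)
    ultimately show ?thesis unfolding has_vector_derivative_def F_def by simp
  qed
  have "(LBINT x=ereal 0..ereal 1. cis (2*pi*m*x)) = F 1 - F 0"
    by (rule interval_integral_FTC_finite[where F=F and f="\<lambda>x. cis (2*pi*m*x)" and a=0 and b=1])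
       (auto intro!: continuous_intros d)
  also have "F 1 - F 0 = 0"
  proof -
    have "cis (2*pi*m*1) = 1" by (simp add: cis_multiple_2pi)
    then show ?thesis by (simp add: F_def)
  qed
  finally have "(LBINT x:{0..1}. cis (2*pi*m*x)) = 0" by (simp add: interval_integral_Icc)
  then show ?thesis using False by (simp add: set_lebesgue_integral_def)
qed

lemma inH_integrable:
  assumes "inH g"
  shows "integrable lborel g"
proof -
  have [measurable]: "g \<in> borel_measurable lborel" and i2: "integrable lborel (\<lambda>x. (cmod (g x))\<^sup>2)"
    and z: "\<And>x. x \<notin> {0..1} \<Longrightarrow> g x = 0"
    using assms by (auto simp: inH_def)
  have i1: "integrable lborel (\<lambda>x. indicator {0..1::real} x :: real)"
    by (simp add: integrable_indicator_iff)
  show ?thesis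
  proof (rule Bochner_Integration.integrable_bound[of _ "\<lambda>x. indicator {0..1::real} x + (cmod (g x))\<^sup>2"])
    show "integrable lborel (\<lambda>x. indicator {0..1::real} x + (cmod (g x))\<^sup>2)" using i1 i2 by simp
    show "AE x in lborel. norm (g x) \<le> norm (indicator {0..1::real} x + (cmod (g x))\<^sup>2)"
    proof (rule AE_I2)
      fix x
      show "norm (g x) \<le> norm (indicator {0..1::real} x + (cmod (g x))\<^sup>2)"
      proof (cases "x \<in> {0..1}")
        case True
        have "0 \<le> (cmod (g x) - 1)\<^sup>2" by simp
        then have "2 * cmod (g x) \<le> 1 + (cmod (g x))\<^sup>2" by (simp add: power2_diff)
        then have "cmod (g x) \<le> 1 + (cmod (g x))\<^sup>2" using norm_ge_zero[of "g x"] by linarith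
        then show ?thesis using True by simp
      next
        case False then show ?thesis using z by simp
      qed
    qed
  qed simp
qed

lemma integrable_indicator_unit_interval_bounded:
  fixes f :: "real \<Rightarrow> 'a::{banach,second_countable_topology}"
  assumes [measurable]: "f \<in> borel_measurable lborel" and b: "\<And>x. norm (f x) \<le> C"
  shows "integrable lborel (\<lambda>x. indicator {0..1::real} x *\<^sub>R f x)"
proof (rule Bochner_Integration.integrable_bound[of _ "\<lambda>x. C * indicator {0..1::real} x"])
  show "integrable lborel (\<lambda>x. C * indicator {0..1::real} x)"
    by (intro integrable_mult_right) (simp add: integrable_indicator_iff)
  show "AE x in lborel. norm (indicator {0..1::real} x *\<^sub>R f x) \<le> norm (C * indicator {0..1::real} x)"
  proof (rule AE_I2)
    fix x
    have "0 \<le> C" using b[of x] norm_ge_zero order_trans by blast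
    then show "norm (indicator {0..1::real} x *\<^sub>R f x) \<le> norm (C * indicator {0..1::real} x)"
      using b[of x] by (auto simp: indicator_def)
  qed
qed simp

lemma integrable_mult_bounded:
  fixes g u :: "real \<Rightarrow> complex"
  assumes "integrable lborel g" and [measurable]: "u \<in> borel_measurable lborel" and b: "\<And>x. cmod (u x) \<le> C"
  shows "integrable lborel (\<lambda>x. g x * u x)"
proof (rule Bochner_Integration.integrable_bound[of _ "\<lambda>x. C * cmod (g x)"])
  show "integrable lborel (\<lambda>x. C * cmod (g x))" using assms(1) by simp
  have [measurable]: "g \<in> borel_measurable lborel" using assms(1) by simp
  show "(\<lambda>x. g x * u x) \<in> borel_measurable lborel" by measurable
  show "AE x in lborel. norm (g x * u x) \<le> norm (C * cmod (g x))"
  proof (rule AE_I2)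
    fix x
    have "0 \<le> C" using b[of x] norm_ge_zero order_trans by blast
    then show "norm (g x * u x) \<le> norm (C * cmod (g x))"
      using b[of x] by (simp add: norm_mult) (metis mult.commute mult_left_mono norm_ge_zero)
  qed
qed

lemma FT_measurable:
  assumes [measurable]: "g \<in> borel_measurable lborel"
  shows "FT g \<in> borel_measurable lborel"
proof -
  have "continuous_on UNIV (\<lambda>p::real\<times>real. cis (- (2 * pi * fst p * snd p)))"
    by (intro continuous_intros)
  then have "(\<lambda>p::real\<times>real. cis (- (2 * pi * fst p * snd p))) \<in> borel_measurable borel"
    by (rule borel_measurable_continuous_onI)
  then have [measurable]: "(\<lambda>p::real\<times>real. cis (- (2 * pi * fst p * snd p))) \<in> borel_measurable (lborel \<Otimes>\<^sub>M lborel)"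
    by (simp add: measurable_cong_sets[OF sets_pair_measure_cong[OF sets_lborel sets_lborel] refl] borel_prod)
  have mp: "(\<lambda>p. g (snd p) * cis (- (2 * pi * fst p * snd p))) \<in> borel_measurable (lborel \<Otimes>\<^sub>M lborel)"
    by measurable
  have "(\<lambda>w. LINT x|lborel. g x * cis (- 2 * pi * w * x)) \<in> borel_measurable lborel"
    by (rule lborel.borel_measurable_lebesgue_integral) (simp add: split_beta' mp)
  then show ?thesis unfolding FT_def[abs_def] .
qed

definition fourier_exp :: "real \<Rightarrow> real \<Rightarrow> complex" where
  "fourier_exp w x = cis (2 * pi * w * x)"

lemma norm_fourier_exp [simp]: "cmod (fourier_exp w x) = 1"
  by (simp add: fourier_exp_def)

lemma borel_measurable_fourier_exp [measurable]:
  "fourier_exp w \<in> borel_measurable lborel" "(\<lambda>x. cnj (fourier_exp w x)) \<in> borel_measurable lborel"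
proof -
  have "continuous_on UNIV (fourier_exp w)" "continuous_on UNIV (\<lambda>x. cnj (fourier_exp w x))"
    unfolding fourier_exp_def by (intro continuous_intros)+
  from this[THEN borel_measurable_continuous_onI]
  show "fourier_exp w \<in> borel_measurable lborel" "(\<lambda>x. cnj (fourier_exp w x)) \<in> borel_measurable lborel"
    by simp_all
qed

lemma FT_eq_integral_cnj_fourier_exp: "FT g w = (LINT x|lborel. g x * cnj (fourier_exp w x))"
  by (simp add: FT_def fourier_exp_def cis_cnj)

lemma integrable_mult_cnj_fourier_exp:
  "inH g \<Longrightarrow> integrable lborel (\<lambda>x. g x * cnj (fourier_exp w x))"
  by (rule integrable_mult_bounded[OF inH_integrable, where C=1]) simp_all

lemma FT_lincomb:
  assumes "finite S" and "\<And>n. n \<in> S \<Longrightarrow> inH (\<phi> n)"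
  shows "FT (\<lambda>x. \<Sum>n\<in>S. a n * \<phi> n x) w = (\<Sum>n\<in>S. a n * FT (\<phi> n) w)"
  using assms integrable_mult_cnj_fourier_exp
  by (simp add: FT_eq_integral_cnj_fourier_exp sum_distrib_right mult.assoc
      Bochner_Integration.integral_sum[symmetric])

lemma integral_fourier_exp_orthonormal:
  fixes k l :: int
  shows "(LINT x|lborel. indicator {0..1::real} x *\<^sub>R
      (fourier_exp (t + real_of_int k) x * cnj (fourier_exp (t + real_of_int l) x)))
     = (if k = l then 1 else 0)"
proof -
  have "fourier_exp (t + real_of_int k) x * cnj (fourier_exp (t + real_of_int l) x)
      = cis (2*pi*real_of_int (k - l)*x)" for x
    by (simp add: fourier_exp_def cis_cnj cis_mult algebra_simps)
  then show ?thesis using integral_cis_unit_interval[of "k - l"] by simp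
qed

lemma integral_trig_poly_norm_square:
  fixes c :: "int \<Rightarrow> complex" and t :: real
  assumes finF: "finite F"
  defines "H \<equiv> \<lambda>x. \<Sum>k\<in>F. c k * fourier_exp (t + real_of_int k) x"
  shows "integrable lborel (\<lambda>x. indicator {0..1::real} x *\<^sub>R (cmod (H x))\<^sup>2)"
    and "(LINT x|lborel. indicator {0..1::real} x *\<^sub>R (cmod (H x))\<^sup>2) = (\<Sum>k\<in>F. (cmod (c k))\<^sup>2)"
proof -
  define e where "e k = fourier_exp (t + real_of_int k)" for k
  have H_bound: "cmod (H x) \<le> (\<Sum>k\<in>F. cmod (c k))" for x
    using norm_sum[of "\<lambda>k. c k * e k x" F] by (simp add: H_def e_def norm_mult)
  have [measurable]: "H \<in> borel_measurable lborel" unfolding H_def by measurable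
  show "integrable lborel (\<lambda>x. indicator {0..1::real} x *\<^sub>R (cmod (H x))\<^sup>2)"
    using H_bound
    by (intro integrable_indicator_unit_interval_bounded[where C="(\<Sum>k\<in>F. cmod (c k))\<^sup>2"])
      (auto intro: power_mono)
  have iee: "integrable lborel (\<lambda>x. indicator {0..1::real} x *\<^sub>R (e k x * cnj (e l x)))" for k l
    unfolding e_def by (rule integrable_indicator_unit_interval_bounded[where C=1]) (simp_all add: norm_mult)
  have expand: "complex_of_real (indicator {0..1::real} x *\<^sub>R (cmod (H x))\<^sup>2)
      = (\<Sum>k\<in>F. \<Sum>l\<in>F. (c k * cnj (c l)) * (indicator {0..1::real} x *\<^sub>R (e k x * cnj (e l x))))" for x
  proof -
    have "complex_of_real ((cmod (H x))\<^sup>2) = (\<Sum>k\<in>F. \<Sum>l\<in>F. (c k * e k x) * cnj (c l * e l x))"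
      unfolding complex_norm_square H_def e_def cnj_sum by (rule sum_product)
    then show ?thesis
      by (cases "x \<in> {0..1}") (simp_all add: algebra_simps del: of_real_power)
  qed
  have "complex_of_real (LINT x|lborel. indicator {0..1::real} x *\<^sub>R (cmod (H x))\<^sup>2)
      = (\<Sum>k\<in>F. \<Sum>l\<in>F. (c k * cnj (c l)) * (LINT x|lborel. indicator {0..1::real} x *\<^sub>R (e k x * cnj (e l x))))"
  proof -
    have "(LINT x|lborel. (\<Sum>k\<in>F. \<Sum>l\<in>F. (c k * cnj (c l)) * (indicator {0..1::real} x *\<^sub>R (e k x * cnj (e l x)))))
      = (\<Sum>k\<in>F. LINT x|lborel. (\<Sum>l\<in>F. (c k * cnj (c l)) * (indicator {0..1::real} x *\<^sub>R (e k x * cnj (e l x)))))"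
      by (rule Bochner_Integration.integral_sum)
        (intro Bochner_Integration.integrable_sum integrable_mult_right iee)
    also have "\<dots> = (\<Sum>k\<in>F. \<Sum>l\<in>F. LINT x|lborel. (c k * cnj (c l)) * (indicator {0..1::real} x *\<^sub>R (e k x * cnj (e l x))))"
      by (intro sum.cong refl Bochner_Integration.integral_sum integrable_mult_right iee)
    also have "\<dots> = (\<Sum>k\<in>F. \<Sum>l\<in>F. (c k * cnj (c l)) * (LINT x|lborel. indicator {0..1::real} x *\<^sub>R (e k x * cnj (e l x))))"
      by (simp only: integral_mult_right_zero)
    finally show ?thesis unfolding integral_complex_of_real[symmetric] expand .
  qed
  also have "\<dots> = (\<Sum>k\<in>F. \<Sum>l\<in>F. (c k * cnj (c l)) * (if k = l then 1 else 0))"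
    unfolding e_def by (simp only: integral_fourier_exp_orthonormal)
  also have "\<dots> = complex_of_real (\<Sum>k\<in>F. (cmod (c k))\<^sup>2)"
    using finF by (simp add: if_distrib sum.delta complex_norm_square[simplified] cong: if_cong)
  finally show "(LINT x|lborel. indicator {0..1::real} x *\<^sub>R (cmod (H x))\<^sup>2) = (\<Sum>k\<in>F. (cmod (c k))\<^sup>2)"
    by (simp only: of_real_eq_iff)
qed

lemma le_of_le_sqrt_mult_sqrt:
  fixes a b :: real
  assumes "a \<le> sqrt b * sqrt a" "0 \<le> a" "0 \<le> b"
  shows "a \<le> b"
proof (cases "a = 0")
  case True
  then show ?thesis using assms(3) by simp
next
  case False
  then have "0 < sqrt a" using assms(2) by simp
  moreover have "sqrt a * sqrt a \<le> sqrt b * sqrt a" using assms by simp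
  ultimately have "sqrt a \<le> sqrt b" by (metis mult_right_le_imp_le)
  then show ?thesis by simp
qed

text \<open>Bessel's inequality for the orthonormal system of exponentials with frequencies \<open>t + k\<close> on
  \<open>[0, 1]\<close>: pair \<open>g\<close> with the trigonometric polynomial whose coefficients are its Fourier coefficients.\<close>
lemma Bessel_FT_shifts:
  assumes gH: "inH g" and finF: "finite F"
  shows "(\<Sum>k\<in>F. (cmod (FT g (t + real_of_int k)))\<^sup>2) \<le> (LINT x|lborel. (cmod (g x))\<^sup>2)"
proof -
  have [measurable]: "g \<in> borel_measurable lborel" and i2: "integrable lborel (\<lambda>x. (cmod (g x))\<^sup>2)"
    and outside: "\<And>x. x \<notin> {0..1} \<Longrightarrow> g x = 0"
    using gH by (auto simp: inH_def)
  define c where "c k = FT g (t + real_of_int k)" for k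
  define e where "e k = fourier_exp (t + real_of_int k)" for k
  define h where "h x = indicator {0..1::real} x *\<^sub>R (\<Sum>k\<in>F. c k * e k x)" for x
  define Sc where "Sc = (\<Sum>k\<in>F. (cmod (c k))\<^sup>2)"
  define G where "G = (LINT x|lborel. (cmod (g x))\<^sup>2)"
  have [measurable]: "h \<in> borel_measurable lborel" unfolding h_def e_def by measurable
  have h_square: "(cmod (h x))\<^sup>2 = indicator {0..1::real} x *\<^sub>R (cmod (\<Sum>k\<in>F. c k * e k x))\<^sup>2" for x
    by (simp add: h_def indicator_def)
  note parseval = integral_trig_poly_norm_square[OF finF, where t=t and c=c,
      folded e_def, folded h_square, folded Sc_def]
  have c_eq: "c k = (LINT x|lborel. g x * cnj (e k x))" for k
    unfolding c_def e_def by (rule FT_eq_integral_cnj_fourier_exp)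
  have "complex_of_real Sc = (\<Sum>k\<in>F. cnj (c k) * c k)"
    unfolding Sc_def of_real_sum by (simp only: complex_norm_square mult.commute)
  also have "\<dots> = (\<Sum>k\<in>F. LINT x|lborel. cnj (c k) * (g x * cnj (e k x)))"
    by (simp add: c_eq[symmetric])
  also have "\<dots> = (LINT x|lborel. (\<Sum>k\<in>F. cnj (c k) * (g x * cnj (e k x))))"
    using integrable_mult_cnj_fourier_exp[OF gH]
    by (intro Bochner_Integration.integral_sum[symmetric] integrable_mult_right) (simp add: e_def)
  also have "\<dots> = (LINT x|lborel. g x * cnj (h x))"
  proof (rule Bochner_Integration.integral_cong[OF refl])
    fix x
    have "(\<Sum>k\<in>F. cnj (c k) * (g x * cnj (e k x))) = g x * cnj (\<Sum>k\<in>F. c k * e k x)"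
      by (simp add: sum_distrib_left algebra_simps)
    also have "\<dots> = g x * cnj (h x)" using outside[of x] by (cases "x \<in> {0..1}") (auto simp: h_def)
    finally show "(\<Sum>k\<in>F. cnj (c k) * (g x * cnj (e k x))) = g x * cnj (h x)" .
  qed
  finally have Sc_eq: "complex_of_real Sc = (LINT x|lborel. g x * cnj (h x))" .
  have Sc0: "0 \<le> Sc" unfolding Sc_def by (simp add: sum_nonneg)
  have "Sc \<le> (LINT x|lborel. norm (g x * cnj (h x)))"
    using integral_norm_bound[of lborel "\<lambda>x. g x * cnj (h x)"] Sc0 by (simp add: Sc_eq[symmetric])
  also have "\<dots> \<le> sqrt G * sqrt Sc"
    using Cauchy_Schwarz_integral_nonneg(2)[of "\<lambda>x. cmod (g x)" lborel "\<lambda>x. cmod (h x)",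
        OF _ _ i2 parseval(1)]
    by (simp add: norm_mult G_def parseval(2))
  finally have "Sc \<le> G" using Sc0 by (rule le_of_le_sqrt_mult_sqrt) (simp add: G_def)
  then show ?thesis unfolding Sc_def c_def G_def .
qed

lemma nn_integral_shift_unit_interval:
  fixes q :: "real \<Rightarrow> real"
  assumes [measurable]: "q \<in> borel_measurable borel"
  shows "(\<integral>\<^sup>+\<omega>. ennreal (q \<omega>) * indicator {j..<j + 1} \<omega> \<partial>lborel)
    = (\<integral>\<^sup>+t. ennreal (q (t + j)) * indicator {0..<1::real} t \<partial>lborel)"
proof -
  have "(\<integral>\<^sup>+\<omega>. ennreal (q \<omega>) * indicator {j..<j + 1} \<omega> \<partial>lborel)
      = ennreal \<bar>1\<bar> * (\<integral>\<^sup>+t. ennreal (q (j + 1 * t)) * indicator {j..<j + 1} (j + 1 * t) \<partial>lborel)"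
    by (rule nn_integral_real_affine) auto
  also have "\<dots> = (\<integral>\<^sup>+t. ennreal (q (t + j)) * indicator {0..<1::real} t \<partial>lborel)"
    by (auto intro!: nn_integral_cong simp: indicator_def add.commute)
  finally show ?thesis .
qed

text \<open>Cut \<open>[-K, K]\<close> into unit intervals, shift each onto \<open>[0, 1)\<close>, and apply Bessel's inequality
  pointwise in the shift parameter.\<close>
lemma nn_integral_FT_square_interval_le:
  assumes gH: "inH g"
  shows "(\<integral>\<^sup>+\<omega>. ennreal ((cmod (FT g \<omega>))\<^sup>2) * indicator {- real K..real K} \<omega> \<partial>lborel)
    \<le> ennreal (LINT x|lborel. (cmod (g x))\<^sup>2)"
proof -
  define q where "q \<omega> = (cmod (FT g \<omega>))\<^sup>2" for \<omega>
  define G where "G = (LINT x|lborel. (cmod (g x))\<^sup>2)"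
  define J where "J = {- int K..int K}"
  have [measurable]: "g \<in> borel_measurable lborel" using gH by (simp add: inH_def)
  have q_meas[measurable]: "q \<in> borel_measurable borel"
    using FT_measurable[of g] unfolding q_def by simp
  have cover: "ennreal (q \<omega>) * indicator {- real K..real K} \<omega>
      \<le> (\<Sum>j\<in>J. ennreal (q \<omega>) * indicator {real_of_int j..<real_of_int j + 1} \<omega>)" for \<omega>
  proof (cases "\<omega> \<in> {- real K..real K}")
    case True
    then have "\<lfloor>\<omega>\<rfloor> \<in> J" unfolding J_def by (auto simp: le_floor_iff floor_le_iff)
    then have "ennreal (q \<omega>) * indicator {real_of_int \<lfloor>\<omega>\<rfloor>..<real_of_int \<lfloor>\<omega>\<rfloor> + 1} \<omega>
        \<le> (\<Sum>j\<in>J. ennreal (q \<omega>) * indicator {real_of_int j..<real_of_int j + 1} \<omega>)"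
      by (intro member_le_sum) (auto simp: J_def)
    then show ?thesis using True by simp
  qed simp
  have "(\<integral>\<^sup>+\<omega>. ennreal (q \<omega>) * indicator {- real K..real K} \<omega> \<partial>lborel)
      \<le> (\<integral>\<^sup>+\<omega>. (\<Sum>j\<in>J. ennreal (q \<omega>) * indicator {real_of_int j..<real_of_int j + 1} \<omega>) \<partial>lborel)"
    by (rule nn_integral_mono) (rule cover)
  also have "\<dots> = (\<Sum>j\<in>J. \<integral>\<^sup>+\<omega>. ennreal (q \<omega>) * indicator {real_of_int j..<real_of_int j + 1} \<omega> \<partial>lborel)"
    by (rule nn_integral_sum) auto
  also have "\<dots> = (\<Sum>j\<in>J. \<integral>\<^sup>+t. ennreal (q (t + real_of_int j)) * indicator {0..<1::real} t \<partial>lborel)"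
    by (simp only: nn_integral_shift_unit_interval[OF q_meas])
  also have "\<dots> = (\<integral>\<^sup>+t. ennreal (\<Sum>j\<in>J. q (t + real_of_int j)) * indicator {0..<1::real} t \<partial>lborel)"
  proof -
    have "(\<Sum>j\<in>J. \<integral>\<^sup>+t. ennreal (q (t + real_of_int j)) * indicator {0..<1::real} t \<partial>lborel)
        = (\<integral>\<^sup>+t. (\<Sum>j\<in>J. ennreal (q (t + real_of_int j)) * indicator {0..<1::real} t) \<partial>lborel)"
      by (rule nn_integral_sum[symmetric]) auto
    also have "\<dots> = (\<integral>\<^sup>+t. ennreal (\<Sum>j\<in>J. q (t + real_of_int j)) * indicator {0..<1::real} t \<partial>lborel)"
      by (rule nn_integral_cong) (simp add: sum_distrib_right[symmetric] q_def)
    finally show ?thesis .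
  qed
  also have "\<dots> \<le> (\<integral>\<^sup>+t. ennreal G * indicator {0..<1::real} t \<partial>lborel)"
    using Bessel_FT_shifts[OF gH, of J] unfolding q_def G_def J_def
    by (intro nn_integral_mono mult_right_mono ennreal_leI) auto
  also have "\<dots> = ennreal G" by (simp add: nn_integral_cmult_indicator)
  finally show ?thesis unfolding q_def G_def .
qed

lemma square_integrable_FT:
  assumes gH: "inH g"
  shows "square_integrable lborel (FT g)"
proof -
  have [measurable]: "g \<in> borel_measurable lborel" using gH by (simp add: inH_def)
  have [measurable]: "FT g \<in> borel_measurable borel" using FT_measurable[of g] by simp
  define f where "f K \<omega> = ennreal ((cmod (FT g \<omega>))\<^sup>2) * indicator {- real K..real K} \<omega>"
    for K :: nat and \<omega>
  have "incseq f"
    by (auto simp: incseq_def le_fun_def f_def indicator_def intro!: mult_left_mono)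
  have Sup_f: "(SUP K. f K \<omega>) = ennreal ((cmod (FT g \<omega>))\<^sup>2)" for \<omega>
  proof (rule antisym)
    show "(SUP K. f K \<omega>) \<le> ennreal ((cmod (FT g \<omega>))\<^sup>2)"
      by (rule SUP_least) (auto simp: f_def indicator_def)
    obtain K :: nat where "\<bar>\<omega>\<bar> \<le> real K" using real_arch_simple by blast
    then have "f K \<omega> = ennreal ((cmod (FT g \<omega>))\<^sup>2)" by (auto simp: f_def indicator_def)
    then show "ennreal ((cmod (FT g \<omega>))\<^sup>2) \<le> (SUP K. f K \<omega>)" by (metis SUP_upper UNIV_I)
  qed
  have "(\<integral>\<^sup>+\<omega>. ennreal ((cmod (FT g \<omega>))\<^sup>2) \<partial>lborel) = (SUP K. integral\<^sup>N lborel (f K))"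
    unfolding Sup_f[symmetric]
    by (rule nn_integral_monotone_convergence_SUP[OF \<open>incseq f\<close>]) (unfold f_def, measurable)
  also have "\<dots> \<le> ennreal (LINT x|lborel. (cmod (g x))\<^sup>2)"
    unfolding f_def by (rule SUP_least) (rule nn_integral_FT_square_interval_le[OF gH])
  also have "\<dots> < \<infinity>" by simp
  finally have "(\<integral>\<^sup>+\<omega>. ennreal ((cmod (FT g \<omega>))\<^sup>2) \<partial>lborel) < \<infinity>" .
  then show ?thesis
    unfolding square_integrable_def using FT_measurable[of g] by (auto intro: integrableI_nonneg)
qed

lemma Econc_eq_Sup_image:
  "Econc U z = Sup (insert 0 ((\<lambda>f. normOn (- {-z<..<z}) (FT f)) ` {f \<in> U. L2norm f = 1}))"
  by (simp only: Econc_def setcompr_eq_image)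

lemma riesz_L2_functional_FT_restrict:
  assumes "finite I" and H: "\<forall>n\<in>I. inH (\<phi> n)" and "riesz_basis_consts \<phi> I d1 d2"
    and J [measurable]: "J \<in> sets borel"
  shows "riesz_L2_functional \<phi> I d1 d2 lborel (\<lambda>n w. indicator J w * FT (\<phi> n) w) (\<lambda>f. normOn J (FT f))"
proof
  show "finite I" "riesz_basis_consts \<phi> I d1 d2" by fact+
  show "square_integrable lborel (\<lambda>w. indicator J w * FT (\<phi> n) w)" if "n \<in> I" for n
  proof -
    have "square_integrable lborel (FT (\<phi> n))" using H that by (simp add: square_integrable_FT)
    then have [measurable]: "FT (\<phi> n) \<in> borel_measurable borel"
      and "integrable lborel (\<lambda>w. (cmod (FT (\<phi> n) w))\<^sup>2)"
      by (auto simp: square_integrable_def)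
    then have "integrable lborel (\<lambda>w. indicator J w *\<^sub>R (cmod (FT (\<phi> n) w))\<^sup>2)"
      by (intro integrable_mult_indicator) auto
    moreover have "(\<lambda>w. indicator J w *\<^sub>R (cmod (FT (\<phi> n) w))\<^sup>2) = (\<lambda>w. (cmod (indicator J w * FT (\<phi> n) w))\<^sup>2)"
      by (auto simp: indicator_def)
    ultimately show ?thesis by (simp add: square_integrable_def)
  qed
  show "normOn J (FT (\<lambda>x. \<Sum>n\<in>S. a n * \<phi> n x))
      = L2_seminorm lborel (\<lambda>w. \<Sum>n\<in>S. a n * (indicator J w * FT (\<phi> n) w))" if "S \<subseteq> I" for S a
  proof -
    have "finite S" using \<open>finite I\<close> that finite_subset by blast
    then have "FT (\<lambda>x. \<Sum>n\<in>S. a n * \<phi> n x) w = (\<Sum>n\<in>S. a n * FT (\<phi> n) w)" for w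
      using FT_lincomb H that by blast
    then have "indicator J w *\<^sub>R (cmod (FT (\<lambda>x. \<Sum>n\<in>S. a n * \<phi> n x) w))\<^sup>2
        = (cmod (\<Sum>n\<in>S. a n * (indicator J w * FT (\<phi> n) w)))\<^sup>2" for w
      by (simp add: indicator_def)
    then show ?thesis by (simp add: normOn_def L2_seminorm_def set_lebesgue_integral_def)
  qed
qed

lemma Econc_partition_le:
  assumes "finite I" "\<forall>n\<in>I. inH (\<phi> n)" "riesz_basis_consts \<phi> I d1 d2"
    and R: "finite R" "disjoint_family_on P R" "(\<Union>i\<in>R. P i) = I"
  shows "Econc (fspan \<phi> I) z \<le> sqrt (d2 / d1 * (\<Sum>i\<in>R. (Econc (fspan \<phi> (P i)) z)\<^sup>2))"
proof -
  interpret riesz_L2_functional \<phi> I d1 d2 lborel "\<lambda>n w. indicator (- {-z<..<z}) w * FT (\<phi> n) w"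
    "\<lambda>f. normOn (- {-z<..<z}) (FT f)"
    using assms(1-3) by (rule riesz_L2_functional_FT_restrict) auto
  show ?thesis unfolding Econc_eq_Sup_image by (rule Sup_V_unit_partition_le[OF R])
qed

lemma riesz_L2_functional_FT_samples:
  assumes "finite I" and H: "\<forall>n\<in>I. inH (\<phi> n)" and "riesz_basis_consts \<phi> I d1 d2"
    and fr: "fourier_frame \<omega>"
  shows "riesz_L2_functional \<phi> I d1 d2 (count_space A) (\<lambda>n k. FT (\<phi> n) (\<omega> k))
    (\<lambda>f. sqrt (\<Sum>\<^sub>\<infinity>k\<in>A. (cmod (FT f (\<omega> k)))\<^sup>2))"
proof
  show "finite I" "riesz_basis_consts \<phi> I d1 d2" by fact+
  show sq: "square_integrable (count_space A) (\<lambda>k. FT (\<phi> n) (\<omega> k))" if "n \<in> I" for n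
  proof -
    have "(\<lambda>k. (cmod (FT (\<phi> n) (\<omega> k)))\<^sup>2) summable_on UNIV"
      using fr H that unfolding fourier_frame_def by blast
    then have "(\<lambda>k. (cmod (FT (\<phi> n) (\<omega> k)))\<^sup>2) summable_on A"
      by (rule summable_on_subset_banach) simp
    then show ?thesis
      by (simp add: square_integrable_def integrable_count_space_if_summable_on)
  qed
  show "sqrt (\<Sum>\<^sub>\<infinity>k\<in>A. (cmod (FT (\<lambda>x. \<Sum>n\<in>S. a n * \<phi> n x) (\<omega> k)))\<^sup>2)
      = L2_seminorm (count_space A) (\<lambda>k. \<Sum>n\<in>S. a n * FT (\<phi> n) (\<omega> k))" if S: "S \<subseteq> I" for S a
  proof -
    have finS: "finite S" using \<open>finite I\<close> S finite_subset by blast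
    have "square_integrable (count_space A) (\<lambda>k. \<Sum>n\<in>S. a n * FT (\<phi> n) (\<omega> k))"
      using sq S by (intro square_integrable_lincomb[OF finS]) auto
    moreover have "FT (\<lambda>x. \<Sum>n\<in>S. a n * \<phi> n x) (\<omega> k) = (\<Sum>n\<in>S. a n * FT (\<phi> n) (\<omega> k))" for k
      using FT_lincomb[OF finS] H S by blast
    ultimately show ?thesis
      by (simp add: L2_seminorm_def square_integrable_def infsum_eq_integral_count_space)
  qed
qed

lemma Etilde_partition_le:
  assumes "finite I" "\<forall>n\<in>I. inH (\<phi> n)" "riesz_basis_consts \<phi> I d1 d2" "fourier_frame \<omega>"
    and R: "finite R" "disjoint_family_on P R" "(\<Union>i\<in>R. P i) = I"
  shows "Etilde \<omega> (fspan \<phi> I) N \<le> sqrt (d2 / d1 * (\<Sum>i\<in>R. (Etilde \<omega> (fspan \<phi> (P i)) N)\<^sup>2))"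
proof -
  define A where "A = {n::int. \<bar>n\<bar> > int N}"
  define V where "V f = sqrt (\<Sum>\<^sub>\<infinity>k\<in>A. (cmod (FT f (\<omega> k)))\<^sup>2)" for f
  interpret riesz_L2_functional \<phi> I d1 d2 "count_space A" "\<lambda>n k. FT (\<phi> n) (\<omega> k)" V
    unfolding V_def using assms(1-4) by (rule riesz_L2_functional_FT_samples)
  have Etilde_eq: "Etilde \<omega> (fspan \<phi> S) N = Sup (insert 0 (V ` {f \<in> fspan \<phi> S. L2norm f = 1}))"
    if "S \<subseteq> I" for S
  proof -
    have V_square: "(\<Sum>\<^sub>\<infinity>k\<in>A. (cmod (FT f (\<omega> k)))\<^sup>2) = (V f)\<^sup>2" for f
      by (simp add: V_def infsum_nonneg)
    have "Etilde \<omega> (fspan \<phi> S) N = sqrt (Sup (insert 0 ((\<lambda>f. (V f)\<^sup>2) ` {f \<in> fspan \<phi> S. L2norm f = 1})))"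
      unfolding Etilde_def A_def[symmetric] V_square by (simp only: setcompr_eq_image)
    also have "\<dots> = Sup (insert 0 (V ` {f \<in> fspan \<phi> S. L2norm f = 1}))"
      by (rule sqrt_Sup_insert_0_power2[OF _ bdd_above_V_unit[OF that]]) (simp add: V_def infsum_nonneg)
    finally show ?thesis .
  qed
  have "P i \<subseteq> I" if "i \<in> R" for i using R(3) that by blast
  then show ?thesis
    using Sup_V_unit_partition_le[OF R] by (simp add: Etilde_eq)
qed

theorem lemma5p9:
  fixes I :: "nat set" and \<phi> :: "nat \<Rightarrow> real \<Rightarrow> complex" and d1 d2 :: real
    and r :: nat and P :: "nat \<Rightarrow> nat set"
  assumes "finite I"
    and "\<forall>n\<in>I. inH (\<phi> n)"
    and "riesz_basis_consts \<phi> I d1 d2"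
    and "\<forall>i\<in>{1..r}. \<forall>j\<in>{1..r}. i \<noteq> j \<longrightarrow> P i \<inter> P j = {}"
    and "(\<Union>i\<in>{1..r}. P i) = I"
  shows "(\<forall>z::real. z \<ge> 0 \<longrightarrow>
            Econc (fspan \<phi> I) z \<le> sqrt (d2 / d1 * (\<Sum>i=1..r. (Econc (fspan \<phi> (P i)) z)\<^sup>2)))
       \<and> (\<forall>\<omega>. fourier_frame \<omega> \<longrightarrow> (\<forall>N::nat.
            Etilde \<omega> (fspan \<phi> I) N \<le> sqrt (d2 / d1 * (\<Sum>i=1..r. (Etilde \<omega> (fspan \<phi> (P i)) N)\<^sup>2))))"
proof -
  have partition: "finite {1..r}" "disjoint_family_on P {1..r}" "(\<Union>i\<in>{1..r}. P i) = I"
    using assms(4,5) by (auto simp: disjoint_family_on_def)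
  show ?thesis
    using Econc_partition_le[OF assms(1-3) partition] Etilde_partition_le[OF assms(1-3) _ partition]
    by blast
qed

end
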